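(* All POPs $(a,b,c;d,e)$ with either $\{a,b,c\}=\{1,2,3\}$ and $\{d,e\}=\{4,5\}$, or $\{a,b,c\}=\{3,4,5\}$ and $\{d,e\}=\{1,2\}$, are Wilf-equivalent to one another.
   Context: A partially ordered pattern (POP) $p$ of size $k$ is a partial order $\le_p$ on $[k]$. A permutation $\pi=\pi_1\cdots\pi_n$ contains $p$ if there are indices $i_1<\dots<i_k$ with $\pi_{i_j}<\pi_{i_m}$ whenever $j<_p m$; otherwise it avoids $p$. $p\sim q$ (Wilf-equivalence) means the numbers of permutations of $[n]$ avoiding $p$ and avoiding $q$ coincide for all $n\ge1$. Notation: $(a,b,c;d,e)$ denotes the POP of size $5$ on $\{a,b,c,d,e\}=[5]$ whose relations are generated by the chain $c<b<a$ and the chain $e<d$ (no other comparabilities). *)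

theory Defs
  imports Main
begin

text \<open>A POP of size k is given by its strict order relation on {1..k}
  (rel j m means j <_p m).  Permutations of [n] are lists of length n
  containing each of 1..n exactly once; list positions are 0-based.\<close>

definition perms :: "nat \<Rightarrow> nat list set" where
  "perms n = {\<pi>. distinct \<pi> \<and> set \<pi> = {1..n}}"

definition contains_pop :: "nat \<Rightarrow> (nat \<Rightarrow> nat \<Rightarrow> bool) \<Rightarrow> nat list \<Rightarrow> bool" where
  "contains_pop k rel \<pi> \<longleftrightarrow>
     (\<exists>idx :: nat \<Rightarrow> nat.
        (\<forall>j\<in>{1..k}. idx j < length \<pi>) \<and>
        (\<forall>j\<in>{1..k}. \<forall>m\<in>{1..k}. j < m \<longrightarrow> idx j < idx m) \<and>
        (\<forall>j\<in>{1..k}. \<forall>m\<in>{1..k}. rel j m \<longrightarrow> \<pi> ! idx j < \<pi> ! idx m))"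

definition avoiders :: "nat \<Rightarrow> (nat \<Rightarrow> nat \<Rightarrow> bool) \<Rightarrow> nat \<Rightarrow> nat list set" where
  "avoiders k rel n = {\<pi> \<in> perms n. \<not> contains_pop k rel \<pi>}"

definition wilf_equiv :: "nat \<Rightarrow> (nat \<Rightarrow> nat \<Rightarrow> bool) \<Rightarrow> (nat \<Rightarrow> nat \<Rightarrow> bool) \<Rightarrow> bool" where
  "wilf_equiv k p q \<longleftrightarrow> (\<forall>n\<ge>1. card (avoiders k p n) = card (avoiders k q n))"

text \<open>The POP (a,b,c;d,e): strict order generated by c<b<a and e<d
  (all strict relations listed, i.e. the transitive closure).\<close>

definition pop5 :: "nat \<Rightarrow> nat \<Rightarrow> nat \<Rightarrow> nat \<Rightarrow> nat \<Rightarrow> nat \<Rightarrow> nat \<Rightarrow> bool" where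
  "pop5 a b c d e j m \<longleftrightarrow>
     (j = c \<and> m = b) \<or> (j = b \<and> m = a) \<or> (j = c \<and> m = a) \<or> (j = e \<and> m = d)"

definition admissible5 :: "nat \<Rightarrow> nat \<Rightarrow> nat \<Rightarrow> nat \<Rightarrow> nat \<Rightarrow> bool" where
  "admissible5 a b c d e \<longleftrightarrow>
     ({a, b, c} = {1, 2, 3} \<and> {d, e} = {4, 5}) \<or>
     ({a, b, c} = {3, 4, 5} \<and> {d, e} = {1, 2})"

end

theory Submission
  imports Defs
begin

(* A permutation contains (a,b,c;d,e) with {a,b,c} = {1,2,3} and {d,e} = {4,5} exactly when some
  prefix contains the classical pattern of length three given by the chain c < b < a and the
  remaining suffix contains the pattern e < d. So the avoiders are the permutations in which every
  cut leaves a prefix avoiding the 3-pattern or a monotone suffix. Splitting off the shortest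
  prefix that contains the 3-pattern, after which the suffix is forced, counts them in terms of the
  numbers of arrangements of subsets of [n] avoiding the 3-pattern alone. These numbers do not
  depend on the pattern: reverse and complement connect each of the six patterns with 123 or 132,
  and the avoiders of 123 and of 132 obey the same recursion once they are refined by comparing
  their entries with a threshold value. The POPs with {a,b,c} = {3,4,5} and {d,e} = {1,2} are the
  reverses of those with {a,b,c} = {1,2,3} and {d,e} = {4,5}. *)

section \<open>Counting arrangements\<close>

definition arr_count :: "nat set \<Rightarrow> (nat list \<Rightarrow> bool) \<Rightarrow> nat" where
  "arr_count U P = card {r. distinct r \<and> set r = U \<and> P r}"

lemma finite_arrangements: "finite U \<Longrightarrow> finite {r. distinct r \<and> set r = U \<and> P r}"
  by (rule finite_subset[OF _ finite_subset_distinct]) auto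

lemma arr_count_empty: "P [] \<Longrightarrow> arr_count {} P = 1"
  unfolding arr_count_def by (simp add: Collect_conv_if)

lemma arr_count_cong: "(\<And>r. set r = U \<Longrightarrow> P r = Q r) \<Longrightarrow> arr_count U P = arr_count U Q"
  unfolding arr_count_def by (intro arg_cong[where f=card] Collect_cong) auto

lemma arr_count_partition:
  assumes "finite U"
  shows "arr_count U P = arr_count U (\<lambda>r. P r \<and> Q r) + arr_count U (\<lambda>r. P r \<and> \<not> Q r)"
proof -
  have "{r. distinct r \<and> set r = U \<and> P r} =
      {r. distinct r \<and> set r = U \<and> P r \<and> Q r} \<union> {r. distinct r \<and> set r = U \<and> P r \<and> \<not> Q r}"
    by blast
  then show ?thesis
    unfolding arr_count_def using assms
    by (subst card_Un_disjoint[symmetric]) (auto intro: finite_arrangements arg_cong[where f = card])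
qed

lemma arr_count_Cons:
  assumes "finite U" and "U \<noteq> {}"
  shows "arr_count U P = (\<Sum>y\<in>U. arr_count (U - {y}) (\<lambda>r. P (y # r)))"
proof -
  let ?A = "\<lambda>y. {r. distinct r \<and> set r = U - {y} \<and> P (y # r)}"
  have "{r. distinct r \<and> set r = U \<and> P r} = (\<Union>y\<in>U. (#) y ` ?A y)"
  proof (intro set_eqI iffI)
    fix r assume r: "r \<in> {r. distinct r \<and> set r = U \<and> P r}"
    with \<open>U \<noteq> {}\<close> obtain y r' where r_eq: "r = y # r'" by (cases r) auto
    with r have "y \<in> U" and "r' \<in> ?A y" by auto
    with r_eq show "r \<in> (\<Union>y\<in>U. (#) y ` ?A y)" by blast
  next
    fix r assume "r \<in> (\<Union>y\<in>U. (#) y ` ?A y)"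
    then obtain y r' where "y \<in> U" "r' \<in> ?A y" "r = y # r'" by blast
    then show "r \<in> {r. distinct r \<and> set r = U \<and> P r}" by auto
  qed
  then have "arr_count U P = card (\<Union>y\<in>U. (#) y ` ?A y)"
    unfolding arr_count_def by simp
  also have "\<dots> = (\<Sum>y\<in>U. card ((#) y ` ?A y))"
    using assms(1) by (intro card_UN_disjoint) (simp_all add: finite_arrangements, blast)
  also have "\<dots> = (\<Sum>y\<in>U. arr_count (U - {y}) (\<lambda>r. P (y # r)))"
    unfolding arr_count_def by (intro sum.cong refl card_image) simp
  finally show ?thesis .
qed

lemma arr_count_rev: "arr_count U (\<lambda>r. P (rev r)) = arr_count U P"
proof -
  have "{r. distinct r \<and> set r = U \<and> P r} = rev ` {r. distinct r \<and> set r = U \<and> P (rev r)}"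
    by (auto intro!: image_eqI[where x = "rev _"])
  then show ?thesis
    unfolding arr_count_def by (simp add: card_image inj_on_def)
qed

lemma arr_count_image:
  assumes "inj_on f U"
  shows "arr_count (f ` U) P = arr_count U (\<lambda>r. P (map f r))"
proof -
  let ?B = "{r. distinct r \<and> set r = U \<and> P (map f r)}"
  have "{r. distinct r \<and> set r = f ` U \<and> P r} = map f ` ?B"
  proof (intro set_eqI iffI)
    fix r assume r: "r \<in> {r. distinct r \<and> set r = f ` U \<and> P r}"
    let ?r' = "map (inv_into U f) r"
    have "map f ?r' = r"
      using r by (auto intro!: map_idI simp: f_inv_into_f)
    moreover have "distinct ?r'"
      using r by (simp add: distinct_map inj_on_inv_into)
    moreover have "set ?r' = U"
      using r inv_into_image_cancel[OF assms order_refl] by simp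
    ultimately have "?r' \<in> ?B"
      using r by simp
    with \<open>map f ?r' = r\<close> show "r \<in> map f ` ?B" by (metis image_eqI)
  next
    fix r assume "r \<in> map f ` ?B"
    then obtain s where "s \<in> ?B" "r = map f s" by blast
    with assms show "r \<in> {r. distinct r \<and> set r = f ` U \<and> P r}"
      by (simp add: distinct_map)
  qed
  moreover have "inj_on (map f) ?B"
    using assms by (intro inj_onI) (simp add: inj_on_map_eq_map)
  ultimately show ?thesis
    unfolding arr_count_def by (simp add: card_image)
qed

lemma card_avoiders: "card (avoiders k rel n) = arr_count {1..n} (\<lambda>r. \<not> contains_pop k rel r)"
  unfolding avoiders_def perms_def arr_count_def by simp

section \<open>Containment of partially ordered patterns\<close>

lemma contains_pop_cong:
  assumes "\<And>j m. j \<in> {1..k} \<Longrightarrow> m \<in> {1..k} \<Longrightarrow> rel j m = rel' j m"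
  shows "contains_pop k rel xs = contains_pop k rel' xs"
  unfolding contains_pop_def using assms by (intro ex_cong1) auto

lemma contains_pop_Nil: "0 < k \<Longrightarrow> \<not> contains_pop k rel []"
  unfolding contains_pop_def by auto

lemma contains_pop_take: "contains_pop k rel (take i xs) \<Longrightarrow> contains_pop k rel xs"
  unfolding contains_pop_def by (metis (no_types, lifting) length_take min_less_iff_conj nth_take)

lemma contains_pop_rev_imp:
  assumes "contains_pop k rel (rev xs)"
  shows "contains_pop k (\<lambda>j m. rel (k+1-j) (k+1-m)) xs"
proof -
  obtain idx where idx_lt: "\<forall>j\<in>{1..k}. idx j < length xs"
    and idx_mono: "\<forall>j\<in>{1..k}. \<forall>m\<in>{1..k}. j < m \<longrightarrow> idx j < idx m"
    and idx_rel: "\<forall>j\<in>{1..k}. \<forall>m\<in>{1..k}. rel j m \<longrightarrow> rev xs ! idx j < rev xs ! idx m"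
    using assms unfolding contains_pop_def by auto
  have mirror: "k+1-j \<in> {1..k}" if "j \<in> {1..k}" for j
    using that by auto
  define idx' where "idx' j = length xs - 1 - idx (k+1-j)" for j
  show ?thesis
    unfolding contains_pop_def
  proof (intro exI[of _ idx'] conjI ballI impI)
    fix j assume "j \<in> {1..k}"
    then show "idx' j < length xs"
      using idx_lt mirror unfolding idx'_def by fastforce
  next
    fix j m assume j: "j \<in> {1..k}" and m: "m \<in> {1..k}" and "j < m"
    then have "idx (k+1-m) < idx (k+1-j)" and "idx (k+1-j) < length xs"
      using idx_mono idx_lt mirror by auto
    then show "idx' j < idx' m"
      unfolding idx'_def by linarith
  next
    fix j m assume j: "j \<in> {1..k}" and m: "m \<in> {1..k}" and "rel (k+1-j) (k+1-m)"
    then have "rev xs ! idx (k+1-j) < rev xs ! idx (k+1-m)"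
      using idx_rel mirror by blast
    moreover have "idx (k+1-j) < length xs" "idx (k+1-m) < length xs"
      using idx_lt mirror j m by auto
    ultimately show "xs ! idx' j < xs ! idx' m"
      unfolding idx'_def by (simp add: rev_nth)
  qed
qed

lemma contains_pop_rev:
  "contains_pop k rel (rev xs) \<longleftrightarrow> contains_pop k (\<lambda>j m. rel (k+1-j) (k+1-m)) xs"
proof
  assume "contains_pop k (\<lambda>j m. rel (k+1-j) (k+1-m)) xs"
  then have "contains_pop k (\<lambda>j m. rel (k+1-(k+1-j)) (k+1-(k+1-m))) (rev xs)"
    using contains_pop_rev_imp[of k _ "rev xs"] by simp
  then show "contains_pop k rel (rev xs)"
    by (rule iffD1[OF contains_pop_cong, rotated]) auto
qed (rule contains_pop_rev_imp)

lemma contains_pop_map_antimono: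
  assumes "\<forall>x\<in>set xs. \<forall>y\<in>set xs. x < y \<longrightarrow> f y < f x"
  shows "contains_pop k rel (map f xs) = contains_pop k (\<lambda>j m. rel m j) xs"
proof -
  have "(f (xs!i) < f (xs!i')) = (xs!i' < xs!i)" if "i < length xs" "i' < length xs" for i i'
    using assms that by (metis nat_neq_iff nth_mem order.asym)
  then show ?thesis
    unfolding contains_pop_def by (auto; blast)
qed

lemma contains_pop_split_imp:
  assumes "0 < k" and "contains_pop (k+l) rel xs"
  shows "\<exists>i. contains_pop k rel (take i xs) \<and> contains_pop l (\<lambda>j m. rel (j+k) (m+k)) (drop i xs)"
proof -
  obtain idx where idx_lt: "\<forall>j\<in>{1..k+l}. idx j < length xs"
    and idx_mono: "\<forall>j\<in>{1..k+l}. \<forall>m\<in>{1..k+l}. j < m \<longrightarrow> idx j < idx m"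
    and idx_rel: "\<forall>j\<in>{1..k+l}. \<forall>m\<in>{1..k+l}. rel j m \<longrightarrow> xs ! idx j < xs ! idx m"
    using assms(2) unfolding contains_pop_def by blast
  define i where "i = Suc (idx k)"
  have idx_front: "idx j < i" if "j \<in> {1..k}" for j
    using that idx_mono \<open>0 < k\<close> unfolding i_def by (cases "j = k") (auto intro: less_SucI)
  have idx_back: "i \<le> idx (j+k)" if "j \<in> {1..l}" for j
    using that idx_mono \<open>0 < k\<close> unfolding i_def by (simp add: Suc_le_eq)
  have "contains_pop k rel (take i xs)"
    unfolding contains_pop_def
    using idx_lt idx_mono idx_rel idx_front by (intro exI[of _ idx]) auto
  moreover have "contains_pop l (\<lambda>j m. rel (j+k) (m+k)) (drop i xs)"
    unfolding contains_pop_def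
  proof (intro exI[of _ "\<lambda>j. idx (j+k) - i"] conjI ballI impI)
    fix j assume j: "j \<in> {1..l}"
    then have "idx (j+k) < length xs"
      using idx_lt by simp
    then show "idx (j+k) - i < length (drop i xs)"
      using idx_back[OF j] by simp
  next
    fix j m assume "j \<in> {1..l}" "m \<in> {1..l}" "j < m"
    then show "idx (j+k) - i < idx (m+k) - i"
      using idx_mono idx_back[of j] by (simp add: diff_less_mono)
  next
    fix j m assume j: "j \<in> {1..l}" and m: "m \<in> {1..l}" and "rel (j+k) (m+k)"
    then have "xs ! idx (j+k) < xs ! idx (m+k)"
      using idx_rel by simp
    moreover have "idx (j+k) < length xs"
      using idx_lt j by simp
    ultimately show "drop i xs ! (idx (j+k) - i) < drop i xs ! (idx (m+k) - i)"
      using idx_back[OF j] idx_back[OF m] by simp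
  qed
  ultimately show ?thesis by blast
qed

lemma contains_pop_of_split:
  assumes block: "\<And>j m. j \<in> {1..k+l} \<Longrightarrow> m \<in> {1..k+l} \<Longrightarrow> rel j m \<Longrightarrow> (j \<le> k \<longleftrightarrow> m \<le> k)"
    and prefix: "contains_pop k rel (take i xs)"
    and suffix: "contains_pop l (\<lambda>j m. rel (j+k) (m+k)) (drop i xs)"
  shows "contains_pop (k+l) rel xs"
proof -
  obtain idx1 where idx1_lt: "\<forall>j\<in>{1..k}. idx1 j < length (take i xs)"
    and idx1_mono: "\<forall>j\<in>{1..k}. \<forall>m\<in>{1..k}. j < m \<longrightarrow> idx1 j < idx1 m"
    and idx1_rel: "\<forall>j\<in>{1..k}. \<forall>m\<in>{1..k}. rel j m \<longrightarrow> take i xs ! idx1 j < take i xs ! idx1 m"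
    using prefix unfolding contains_pop_def by blast
  obtain idx2 where idx2_lt: "\<forall>j\<in>{1..l}. idx2 j < length (drop i xs)"
    and idx2_mono: "\<forall>j\<in>{1..l}. \<forall>m\<in>{1..l}. j < m \<longrightarrow> idx2 j < idx2 m"
    and idx2_rel: "\<forall>j\<in>{1..l}. \<forall>m\<in>{1..l}. rel (j+k) (m+k) \<longrightarrow> drop i xs ! idx2 j < drop i xs ! idx2 m"
    using suffix unfolding contains_pop_def by blast
  define idx where "idx j = (if j \<le> k then idx1 j else i + idx2 (j - k))" for j
  have front: "j \<in> {1..k}" "idx j = idx1 j" "idx j < i" "idx j < length xs" "xs ! idx j = take i xs ! idx1 j"
    if "j \<in> {1..k+l}" "j \<le> k" for j
    using that idx1_lt unfolding idx_def by auto
  have rear: "j - k \<in> {1..l}" "idx j = i + idx2 (j - k)" "i \<le> idx j" "idx j < length xs"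
    "xs ! idx j = drop i xs ! idx2 (j - k)"
    if "j \<in> {1..k+l}" "\<not> j \<le> k" for j
  proof -
    show jl: "j - k \<in> {1..l}" and idx: "idx j = i + idx2 (j - k)"
      using that unfolding idx_def by auto
    moreover have "idx2 (j - k) < length (drop i xs)"
      using idx2_lt jl by blast
    ultimately show "i \<le> idx j" "idx j < length xs" "xs ! idx j = drop i xs ! idx2 (j - k)"
      by auto
  qed
  have "idx j < idx m" if j: "j \<in> {1..k+l}" and m: "m \<in> {1..k+l}" and "j < m" for j m
  proof -
    consider "m \<le> k" | "j \<le> k" "\<not> m \<le> k" | "\<not> j \<le> k" "j - k < m - k"
      using \<open>j < m\<close> by linarith
    then show ?thesis
      by cases (use front[OF j] front[OF m] rear[OF j] rear[OF m] idx1_mono idx2_mono \<open>j < m\<close> in auto)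
  qed
  moreover have "xs ! idx j < xs ! idx m" if j: "j \<in> {1..k+l}" and m: "m \<in> {1..k+l}" and r: "rel j m" for j m
  proof (cases "j \<le> k")
    case True
    with block[OF j m r] have "m \<le> k" by simp
    with True have "take i xs ! idx1 j < take i xs ! idx1 m"
      using idx1_rel front(1)[OF j] front(1)[OF m] r by blast
    with True \<open>m \<le> k\<close> show ?thesis
      using front[OF j] front[OF m] by simp
  next
    case False
    with block[OF j m r] have "\<not> m \<le> k" by simp
    with False have "rel (j - k + k) (m - k + k)"
      using r by simp
    with False \<open>\<not> m \<le> k\<close> show ?thesis
      using idx2_rel rear[OF j] rear[OF m] by simp
  qed
  moreover have "idx j < length xs" if "j \<in> {1..k+l}" for j
    using that front rear by (cases "j \<le> k") auto
  ultimately show ?thesis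
    unfolding contains_pop_def by blast
qed

lemma contains_pop_split:
  assumes "0 < k"
    and "\<And>j m. j \<in> {1..k+l} \<Longrightarrow> m \<in> {1..k+l} \<Longrightarrow> rel j m \<Longrightarrow> (j \<le> k \<longleftrightarrow> m \<le> k)"
  shows "contains_pop (k+l) rel xs \<longleftrightarrow>
    (\<exists>i. contains_pop k rel (take i xs) \<and> contains_pop l (\<lambda>j m. rel (j+k) (m+k)) (drop i xs))"
  using contains_pop_split_imp[OF assms(1)] contains_pop_of_split[OF assms(2)] by blast

definition prefix_or_suffix :: "(nat list \<Rightarrow> bool) \<Rightarrow> (nat list \<Rightarrow> bool) \<Rightarrow> nat list \<Rightarrow> bool" where
  "prefix_or_suffix P D xs \<longleftrightarrow> (\<forall>i. P (take i xs) \<or> D (drop i xs))"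

lemma not_contains_pop_split_iff:
  assumes "0 < k"
    and "\<And>j m. j \<in> {1..k+l} \<Longrightarrow> m \<in> {1..k+l} \<Longrightarrow> rel j m \<Longrightarrow> (j \<le> k \<longleftrightarrow> m \<le> k)"
  shows "\<not> contains_pop (k+l) rel xs \<longleftrightarrow>
    prefix_or_suffix (\<lambda>r. \<not> contains_pop k rel r) (\<lambda>r. \<not> contains_pop l (\<lambda>j m. rel (j+k) (m+k)) r) xs"
  using contains_pop_split[OF assms, where xs = xs] unfolding prefix_or_suffix_def by blast

lemma contains_21_iff_not_sorted: "contains_pop 2 (\<lambda>j m. j = 2 \<and> m = 1) ys \<longleftrightarrow> \<not> sorted ys"
proof
  assume "contains_pop 2 (\<lambda>j m. j = 2 \<and> m = 1) ys"
  then obtain idx :: "nat \<Rightarrow> nat" where idx_lt: "\<forall>j\<in>{1..2}. idx j < length ys"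
    and idx_mono: "\<forall>j\<in>{1..2}. \<forall>m\<in>{1..2}. j < m \<longrightarrow> idx j < idx m"
    and idx_rel: "\<forall>j\<in>{1..2}. \<forall>m\<in>{1..2}. j = 2 \<and> m = 1 \<longrightarrow> ys ! idx j < ys ! idx m"
    unfolding contains_pop_def by blast
  have "idx 1 < idx 2" "idx 2 < length ys" "ys ! idx 2 < ys ! idx 1"
    using idx_lt idx_mono idx_rel by auto
  then show "\<not> sorted ys"
    unfolding sorted_iff_nth_mono_less by (meson leD)
next
  assume "\<not> sorted ys"
  then obtain i j where "i < j" "j < length ys" "ys ! j < ys ! i"
    unfolding sorted_iff_nth_mono_less by (meson not_le)
  then show "contains_pop 2 (\<lambda>j m. j = 2 \<and> m = 1) ys"
    unfolding contains_pop_def by (intro exI[of _ "\<lambda>t. if t = 1 then i else j"]) auto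
qed

lemma contains_12_iff_not_sorted_desc: "contains_pop 2 (\<lambda>j m. j = 1 \<and> m = 2) ys \<longleftrightarrow> \<not> sorted_wrt (\<ge>) ys"
proof -
  have "contains_pop 2 (\<lambda>j m. j = 1 \<and> m = 2) ys \<longleftrightarrow> contains_pop 2 (\<lambda>j m. j = 2 \<and> m = 1) (rev ys)"
    unfolding contains_pop_rev by (rule contains_pop_cong) auto
  also have "\<dots> \<longleftrightarrow> \<not> sorted (rev ys)"
    by (rule contains_21_iff_not_sorted)
  finally show ?thesis
    by (simp add: sorted_wrt_rev)
qed

section \<open>Classical patterns of length three\<close>

definition has_pair :: "(nat \<Rightarrow> nat \<Rightarrow> bool) \<Rightarrow> nat list \<Rightarrow> bool" where
  "has_pair Q xs \<longleftrightarrow> (\<exists>i j. i < j \<and> j < length xs \<and> Q (xs ! i) (xs ! j))"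

definition has_triple :: "(nat \<Rightarrow> nat \<Rightarrow> nat \<Rightarrow> bool) \<Rightarrow> nat list \<Rightarrow> bool" where
  "has_triple T xs \<longleftrightarrow> (\<exists>i j k. i < j \<and> j < k \<and> k < length xs \<and> T (xs ! i) (xs ! j) (xs ! k))"

lemma has_pair_mono: "has_pair Q xs \<Longrightarrow> (\<And>u v. Q u v \<Longrightarrow> Q' u v) \<Longrightarrow> has_pair Q' xs"
  unfolding has_pair_def by blast

lemma has_triple_cong: "(\<And>u v w. T u v w \<longleftrightarrow> T' u v w) \<Longrightarrow> has_triple T xs \<longleftrightarrow> has_triple T' xs"
  unfolding has_triple_def by simp

lemma has_pair_Cons: "has_pair Q (y # r) \<longleftrightarrow> has_pair Q r \<or> (\<exists>z\<in>set r. Q y z)"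
proof
  assume "has_pair Q (y # r)"
  then obtain j k where jk: "j < k" "k < length (y # r)" "Q ((y # r) ! j) ((y # r) ! k)"
    unfolding has_pair_def by blast
  then obtain k' where "k = Suc k'"
    by (metis less_imp_Suc_add)
  with jk show "has_pair Q r \<or> (\<exists>z\<in>set r. Q y z)"
    unfolding has_pair_def by (cases j) auto
next
  assume "has_pair Q r \<or> (\<exists>z\<in>set r. Q y z)"
  then show "has_pair Q (y # r)"
  proof
    assume "has_pair Q r"
    then obtain j k where "j < k" "k < length r" "Q (r ! j) (r ! k)"
      unfolding has_pair_def by blast
    then show ?thesis
      unfolding has_pair_def by (intro exI[of _ "Suc j"] exI[of _ "Suc k"]) simp
  next
    assume "\<exists>z\<in>set r. Q y z"
    then obtain k where "k < length r" "Q y (r ! k)"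
      by (metis in_set_conv_nth)
    then show ?thesis
      unfolding has_pair_def by (intro exI[of _ 0] exI[of _ "Suc k"]) simp
  qed
qed

lemma has_triple_Cons: "has_triple T (x # r) \<longleftrightarrow> has_triple T r \<or> has_pair (T x) r"
proof
  assume "has_triple T (x # r)"
  then obtain i j k where ijk: "i < j" "j < k" "k < length (x # r)"
    "T ((x # r) ! i) ((x # r) ! j) ((x # r) ! k)"
    unfolding has_triple_def by blast
  then obtain j' k' where "j = Suc j'" "k = Suc k'"
    by (metis less_imp_Suc_add)
  with ijk show "has_triple T r \<or> has_pair (T x) r"
    unfolding has_triple_def has_pair_def by (cases i) auto
next
  assume "has_triple T r \<or> has_pair (T x) r"
  then show "has_triple T (x # r)"
  proof
    assume "has_triple T r"
    then obtain i j k where "i < j" "j < k" "k < length r" "T (r ! i) (r ! j) (r ! k)"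
      unfolding has_triple_def by blast
    then show ?thesis
      unfolding has_triple_def by (intro exI[of _ "Suc i"] exI[of _ "Suc j"] exI[of _ "Suc k"]) simp
  next
    assume "has_pair (T x) r"
    then obtain j k where "j < k" "k < length r" "T x (r ! j) (r ! k)"
      unfolding has_pair_def by blast
    then show ?thesis
      unfolding has_triple_def by (intro exI[of _ 0] exI[of _ "Suc j"] exI[of _ "Suc k"]) simp
  qed
qed

lemma has_triple_Cons_Cons:
  "has_triple T (x # y # r) \<longleftrightarrow> has_triple T (y # r) \<or> has_pair (T x) r \<or> (\<exists>z\<in>set r. T x y z)"
  by (simp add: has_triple_Cons has_pair_Cons)

lemma ball_one_to_three: "(\<forall>t\<in>{1..3::nat}. P t) \<longleftrightarrow> P 1 \<and> P 2 \<and> P 3"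
proof -
  have "{1..3::nat} = {1, 2, 3}"
    by auto
  then show ?thesis
    by simp
qed

lemma contains_pop_3_iff:
  "contains_pop 3 rel xs \<longleftrightarrow>
     has_triple (\<lambda>u v w. \<forall>t\<in>{1..3}. \<forall>s\<in>{1..3}. rel t s \<longrightarrow> [u, v, w] ! (t-1) < [u, v, w] ! (s-1)) xs"
proof
  assume "contains_pop 3 rel xs"
  then obtain idx :: "nat \<Rightarrow> nat" where idx_lt: "\<forall>j\<in>{1..3}. idx j < length xs"
    and idx_mono: "\<forall>j\<in>{1..3}. \<forall>m\<in>{1..3}. j < m \<longrightarrow> idx j < idx m"
    and idx_rel: "\<forall>j\<in>{1..3}. \<forall>m\<in>{1..3}. rel j m \<longrightarrow> xs ! idx j < xs ! idx m"
    unfolding contains_pop_def by blast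
  then show "has_triple (\<lambda>u v w. \<forall>t\<in>{1..3}. \<forall>s\<in>{1..3}. rel t s \<longrightarrow> [u, v, w] ! (t-1) < [u, v, w] ! (s-1)) xs"
    unfolding has_triple_def ball_one_to_three
    by (intro exI[of _ "idx 1"] exI[of _ "idx 2"] exI[of _ "idx 3"]) simp
next
  assume "has_triple (\<lambda>u v w. \<forall>t\<in>{1..3}. \<forall>s\<in>{1..3}. rel t s \<longrightarrow> [u, v, w] ! (t-1) < [u, v, w] ! (s-1)) xs"
  then obtain i j k where "i < j" "j < k" "k < length xs"
    and "\<forall>t\<in>{1..3}. \<forall>s\<in>{1..3}. rel t s \<longrightarrow> [xs ! i, xs ! j, xs ! k] ! (t-1) < [xs ! i, xs ! j, xs ! k] ! (s-1)"
    unfolding has_triple_def by blast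
  then show "contains_pop 3 rel xs"
    unfolding contains_pop_def ball_one_to_three
    by (intro exI[of _ "\<lambda>t. [i, j, k] ! (t-1)"]) simp
qed

text \<open>\<open>chain3 a b c\<close> is the POP of size 3 generated by \<open>c < b < a\<close>; thus
  \<open>chain3 3 2 1\<close> is the classical pattern 123 and \<open>chain3 2 3 1\<close> is 132.\<close>

definition chain3 :: "nat \<Rightarrow> nat \<Rightarrow> nat \<Rightarrow> nat \<Rightarrow> nat \<Rightarrow> bool" where
  "chain3 a b c j m \<longleftrightarrow> (j = c \<and> m = b) \<or> (j = b \<and> m = a) \<or> (j = c \<and> m = a)"

lemma contains_123_iff: "contains_pop 3 (chain3 3 2 1) xs \<longleftrightarrow> has_triple (\<lambda>u v w. u < v \<and> v < w) xs"
  unfolding contains_pop_3_iff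
  by (rule has_triple_cong) (simp only: ball_one_to_three, auto simp: chain3_def)

lemma contains_132_iff: "contains_pop 3 (chain3 2 3 1) xs \<longleftrightarrow> has_triple (\<lambda>u v w. u < w \<and> w < v) xs"
  unfolding contains_pop_3_iff
  by (rule has_triple_cong) (simp only: ball_one_to_three, auto simp: chain3_def)

text \<open>\<open>threshold_count a b\<close> counts the arrangements \<open>r\<close> of a set with \<open>a\<close> elements
  \<open>\<le> x\<close> and \<open>b\<close> elements \<open>> x\<close> for which \<open>x # r\<close> avoids 123, and equally those for which
  \<open>x # r\<close> avoids 132. The recursion is over the first entry \<open>y\<close> of \<open>r\<close>: if \<open>y \<le> x\<close>, then \<open>y\<close>
  becomes the new threshold; if \<open>y > x\<close>, then \<open>y\<close> has to be the largest remaining element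
  (for 123), respectively the smallest remaining element above \<open>x\<close> (for 132).\<close>

function threshold_count :: "nat \<Rightarrow> nat \<Rightarrow> nat" where
  "threshold_count a b =
     (if a = 0 \<and> b = 0 then 1
      else (\<Sum>i<a. threshold_count i (a + b - 1 - i)) + (if 0 < b then threshold_count a (b - 1) else 0))"
  by auto
termination by (relation "measure (\<lambda>(a, b). a + b)") auto

declare threshold_count.simps [simp del]

lemma sum_over_ranks:
  fixes L :: "'a::linorder set"
  assumes "finite L"
  shows "(\<Sum>y\<in>L. f (card {u\<in>L. u < y})) = (\<Sum>i<card L. f i)"
  using assms
proof (induction "card L" arbitrary: L)
  case 0
  then show ?case by simp
next
  case (Suc n)
  define m where "m = Max L"
  define L' where "L' = L - {m}"
  have "L \<noteq> {}"
    using Suc.hyps(2) by auto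
  then have m: "m \<in> L" "\<forall>y\<in>L. y \<le> m"
    using Suc.prems unfolding m_def by auto
  then have L: "L = insert m L'" "m \<notin> L'" "finite L'" "card L' = n"
    using Suc unfolding L'_def by auto
  have below_m: "{u\<in>L. u < m} = L'"
    using m unfolding L'_def by force
  have below_y: "{u\<in>L. u < y} = {u\<in>L'. u < y}" if "y \<in> L'" for y
    using that m unfolding L'_def by force
  have "(\<Sum>y\<in>L. f (card {u\<in>L. u < y})) = f n + (\<Sum>y\<in>L'. f (card {u\<in>L'. u < y}))"
    using L below_m below_y by simp
  also have "\<dots> = (\<Sum>i<Suc n. f i)"
    using Suc.hyps(1)[OF L(4)[symmetric] L(3)] L(4) by (simp add: add.commute)
  finally show ?case
    using Suc.hyps(2) by simp
qed

lemma card_above_after_removal: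
  fixes U :: "'a::linorder set"
  assumes "finite U" and "y \<in> U"
  shows "card {u\<in>U - {y}. y < u} = card U - 1 - card {u\<in>U - {y}. u \<le> y}"
proof -
  have "U - {y} = {u\<in>U - {y}. u \<le> y} \<union> {u\<in>U - {y}. y < u}"
    by auto
  then have "card (U - {y}) = card {u\<in>U - {y}. u \<le> y} + card {u\<in>U - {y}. y < u}"
    using assms(1) by (metis (no_types, lifting) card_Un_disjoint disjoint_iff finite_Diff
        finite_Un leD mem_Collect_eq)
  then show ?thesis
    using assms by simp
qed

definition threshold_rec :: "(nat set \<Rightarrow> nat \<Rightarrow> nat) \<Rightarrow> (nat set \<Rightarrow> nat \<Rightarrow> nat) \<Rightarrow> bool" where
  "threshold_rec pick F \<longleftrightarrow> (\<forall>x. F {} x = 1) \<and>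
     (\<forall>U x. finite U \<longrightarrow> U \<noteq> {} \<longrightarrow> F U x =
        (\<Sum>y\<in>{u\<in>U. u \<le> x}. F (U - {y}) y) + (if {u\<in>U. x < u} \<noteq> {} then F (U - {pick U x}) x else 0))"

definition valid_pick :: "(nat set \<Rightarrow> nat \<Rightarrow> nat) \<Rightarrow> bool" where
  "valid_pick pick \<longleftrightarrow> (\<forall>U x. finite U \<longrightarrow> {u\<in>U. x < u} \<noteq> {} \<longrightarrow> pick U x \<in> {u\<in>U. x < u})"

lemma threshold_rec_unique:
  assumes "valid_pick pick" and "threshold_rec pick F" and "threshold_rec pick F'" and "finite U"
  shows "F U x = F' U x"
  using \<open>finite U\<close>
proof (induction "card U" arbitrary: U x rule: less_induct)
  case less
  show ?case
  proof (cases "U = {}")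
    case True
    then show ?thesis
      using assms(2,3) unfolding threshold_rec_def by simp
  next
    case False
    have smaller: "F (U - {y}) z = F' (U - {y}) z" if "y \<in> U" for y z
      using less.hyps[OF card_Diff1_less[OF less.prems that]] less.prems by simp
    let ?H = "{u\<in>U. x < u}"
    have F: "F U x = (\<Sum>y\<in>{u\<in>U. u \<le> x}. F (U - {y}) y) + (if ?H \<noteq> {} then F (U - {pick U x}) x else 0)"
      using assms(2) less.prems False unfolding threshold_rec_def by blast
    have F': "F' U x = (\<Sum>y\<in>{u\<in>U. u \<le> x}. F' (U - {y}) y) + (if ?H \<noteq> {} then F' (U - {pick U x}) x else 0)"
      using assms(3) less.prems False unfolding threshold_rec_def by blast
    show ?thesis
    proof (cases "?H = {}")
      case True
      then show ?thesis
        unfolding F F' using smaller by simp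
    next
      case False
      then have "pick U x \<in> U"
        using assms(1) less.prems unfolding valid_pick_def by blast
      then show ?thesis
        unfolding F F' using smaller False by simp
    qed
  qed
qed

lemma threshold_rec_threshold_count:
  assumes "valid_pick pick"
  shows "threshold_rec pick (\<lambda>U x. threshold_count (card {u\<in>U. u \<le> x}) (card {u\<in>U. x < u}))"
  unfolding threshold_rec_def
proof (intro conjI allI impI)
  fix x
  show "threshold_count (card {u\<in>{}. u \<le> x}) (card {u\<in>{}. x < u}) = 1"
    by (simp add: threshold_count.simps)
next
  fix U :: "nat set" and x :: nat
  assume U: "finite U" "U \<noteq> {}"
  define L where "L = {u\<in>U. u \<le> x}"
  define H where "H = {u\<in>U. x < u}"
  define a where "a = card L"
  define b where "b = card H"
  have fin: "finite L" "finite H"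
    using U unfolding L_def H_def by auto
  have card_U: "card U = a + b"
    unfolding a_def b_def L_def H_def using U
    by (subst card_Un_disjoint[symmetric]) (auto intro: arg_cong[where f = card])
  moreover have "card U \<noteq> 0"
    using U by simp
  ultimately have "a + b \<noteq> 0"
    by simp
  have lower: "threshold_count (card {u\<in>U - {y}. u \<le> y}) (card {u\<in>U - {y}. y < u}) =
      threshold_count (card {u\<in>L. u < y}) (a + b - 1 - card {u\<in>L. u < y})" if "y \<in> L" for y
  proof -
    have "y \<in> U" "{u\<in>U - {y}. u \<le> y} = {u\<in>L. u < y}"
      using that unfolding L_def by auto
    then show ?thesis
      using card_above_after_removal[OF U(1) \<open>y \<in> U\<close>] card_U by simp
  qed
  have upper: "threshold_count (card {u\<in>U - {pick U x}. u \<le> x}) (card {u\<in>U - {pick U x}. x < u}) =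
      threshold_count a (b - 1)" if "H \<noteq> {}"
  proof -
    have "pick U x \<in> H"
      using assms U(1) that unfolding valid_pick_def H_def by blast
    then have "{u\<in>U - {pick U x}. u \<le> x} = L" "{u\<in>U - {pick U x}. x < u} = H - {pick U x}"
      unfolding L_def H_def by auto
    with \<open>pick U x \<in> H\<close> fin show ?thesis
      unfolding a_def b_def by simp
  qed
  have "H \<noteq> {} \<longleftrightarrow> 0 < b"
    using fin unfolding b_def by (simp add: card_gt_0_iff)
  then show "threshold_count (card L) (card H) =
      (\<Sum>y\<in>L. threshold_count (card {u\<in>U - {y}. u \<le> y}) (card {u\<in>U - {y}. y < u})) +
      (if H \<noteq> {} then threshold_count (card {u\<in>U - {pick U x}. u \<le> x}) (card {u\<in>U - {pick U x}. x < u}) else 0)"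
    using lower upper sum_over_ranks[OF fin(1), of "\<lambda>i. threshold_count i (a + b - 1 - i)"] \<open>a + b \<noteq> 0\<close>
    unfolding a_def[symmetric] b_def[symmetric] by (simp add: threshold_count.simps[of a b])
qed

lemma threshold_rec_arr_count:
  fixes A :: "nat \<Rightarrow> nat list \<Rightarrow> bool"
  assumes A_Nil: "\<And>x. A x []"
    and A_below: "\<And>x y r. y \<le> x \<Longrightarrow> A x (y # r) \<longleftrightarrow> A y r"
    and A_above: "\<And>x y r. x < y \<Longrightarrow> y \<notin> set r \<Longrightarrow> A x (y # r) \<longleftrightarrow> y = pick (insert y (set r)) x \<and> A x r"
    and "valid_pick pick"
  shows "threshold_rec pick (\<lambda>U x. arr_count U (A x))"
  unfolding threshold_rec_def
proof (intro conjI allI impI)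
  show "arr_count {} (A x) = 1" for x
    using A_Nil by (rule arr_count_empty)
next
  fix U :: "nat set" and x :: nat
  assume U: "finite U" "U \<noteq> {}"
  let ?L = "{u\<in>U. u \<le> x}" and ?H = "{u\<in>U. x < u}"
  let ?T = "\<lambda>y. arr_count (U - {y}) (\<lambda>r. A x (y # r))"
  have lower: "?T y = arr_count (U - {y}) (A y)" if "y \<in> ?L" for y
    using that A_below by (intro arr_count_cong) simp
  have upper: "?T y = (if y = pick U x then arr_count (U - {y}) (A x) else 0)" if "y \<in> ?H" for y
  proof -
    have "A x (y # r) \<longleftrightarrow> y = pick U x \<and> A x r" if "set r = U - {y}" for r
      using A_above[of x y r] \<open>y \<in> ?H\<close> that by (simp add: insert_absorb)
    then have "?T y = arr_count (U - {y}) (\<lambda>r. y = pick U x \<and> A x r)"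
      by (rule arr_count_cong)
    then show ?thesis
      by (simp add: arr_count_def)
  qed
  have split: "U = ?L \<union> ?H"
    by auto
  have "arr_count U (A x) = (\<Sum>y\<in>?L \<union> ?H. ?T y)"
    unfolding arr_count_Cons[OF U] by (rule sum.cong[OF split refl])
  also have "\<dots> = (\<Sum>y\<in>?L. ?T y) + (\<Sum>y\<in>?H. ?T y)"
    using U(1) by (intro sum.union_disjoint) auto
  also have "(\<Sum>y\<in>?L. ?T y) = (\<Sum>y\<in>?L. arr_count (U - {y}) (A y))"
    using lower by simp
  also have "(\<Sum>y\<in>?H. ?T y) = (\<Sum>y\<in>?H. if y = pick U x then arr_count (U - {y}) (A x) else 0)"
    using upper by simp
  also have "\<dots> = (if ?H \<noteq> {} then arr_count (U - {pick U x}) (A x) else 0)"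
    using U(1) \<open>valid_pick pick\<close> unfolding valid_pick_def by (auto simp: sum.delta)
  finally show "arr_count U (A x) = (\<Sum>y\<in>?L. arr_count (U - {y}) (A y)) +
      (if ?H \<noteq> {} then arr_count (U - {pick U x}) (A x) else 0)" .
qed

lemma valid_pick_Max: "valid_pick (\<lambda>V y. Max V)"
  unfolding valid_pick_def by (auto intro: Max_in order.strict_trans2[OF _ Max_ge])

lemma valid_pick_Min_above: "valid_pick (\<lambda>V y. Min {u\<in>V. y < u})"
  unfolding valid_pick_def
proof (intro allI impI)
  fix V :: "nat set" and y :: nat
  assume "finite V" "{u\<in>V. y < u} \<noteq> {}"
  then show "Min {u\<in>V. y < u} \<in> {u\<in>V. y < u}"
    by (intro Min_in) auto
qed

lemma has_pair_bounded:
  assumes "\<forall>z\<in>set r. z \<le> x" and "\<And>v w. Q v w \<Longrightarrow> x < v \<or> x < w"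
  shows "\<not> has_pair Q r"
proof
  assume "has_pair Q r"
  then obtain i j where "i < j" "j < length r" "Q (r ! i) (r ! j)"
    unfolding has_pair_def by blast
  then have "x < r ! i \<or> x < r ! j" and "r ! i \<le> x" "r ! j \<le> x"
    using assms by auto
  then show False
    by linarith
qed

lemma avoid_123_threshold:
  fixes T :: "nat \<Rightarrow> nat \<Rightarrow> nat \<Rightarrow> bool"
  defines "T \<equiv> \<lambda>u v w. u < v \<and> v < w"
  shows "\<not> has_triple T [x]"
    and "y \<le> x \<Longrightarrow> \<not> has_triple T (x # y # r) \<longleftrightarrow> \<not> has_triple T (y # r)"
    and "x < y \<Longrightarrow> y \<notin> set r \<Longrightarrow>
      \<not> has_triple T (x # y # r) \<longleftrightarrow> y = Max (insert y (set r)) \<and> \<not> has_triple T (x # r)"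
proof -
  show "\<not> has_triple T [x]"
    by (simp add: has_triple_def)
next
  assume "y \<le> x"
  have "has_pair (T x) r \<Longrightarrow> has_pair (T y) r"
    by (erule has_pair_mono) (use \<open>y \<le> x\<close> in \<open>simp add: T_def\<close>)
  then show "\<not> has_triple T (x # y # r) \<longleftrightarrow> \<not> has_triple T (y # r)"
    using \<open>y \<le> x\<close> unfolding has_triple_Cons_Cons by (auto simp: has_triple_Cons T_def)
next
  assume "x < y" "y \<notin> set r"
  have "y = Max (insert y (set r)) \<longleftrightarrow> (\<forall>z\<in>set r. z \<le> y)"
    by (subst eq_commute) (simp add: Max_eq_iff)
  moreover have "\<not> has_pair (T y) r" if "\<forall>z\<in>set r. z \<le> y"
    using that by (rule has_pair_bounded) (simp add: T_def)
  ultimately show "\<not> has_triple T (x # y # r) \<longleftrightarrow> y = Max (insert y (set r)) \<and> \<not> has_triple T (x # r)"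
    using \<open>x < y\<close> unfolding has_triple_Cons_Cons by (auto simp: has_triple_Cons T_def)
qed

lemma avoid_132_threshold:
  fixes T :: "nat \<Rightarrow> nat \<Rightarrow> nat \<Rightarrow> bool"
  defines "T \<equiv> \<lambda>u v w. u < w \<and> w < v"
  shows "\<not> has_triple T [x]"
    and "y \<le> x \<Longrightarrow> \<not> has_triple T (x # y # r) \<longleftrightarrow> \<not> has_triple T (y # r)"
    and "x < y \<Longrightarrow> y \<notin> set r \<Longrightarrow>
      \<not> has_triple T (x # y # r) \<longleftrightarrow> y = Min {u\<in>insert y (set r). x < u} \<and> \<not> has_triple T (x # r)"
proof -
  show "\<not> has_triple T [x]"
    by (simp add: has_triple_def)
next
  assume "y \<le> x"
  have "has_pair (T x) r \<Longrightarrow> has_pair (T y) r"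
    by (erule has_pair_mono) (use \<open>y \<le> x\<close> in \<open>simp add: T_def\<close>)
  then show "\<not> has_triple T (x # y # r) \<longleftrightarrow> \<not> has_triple T (y # r)"
    using \<open>y \<le> x\<close> unfolding has_triple_Cons_Cons by (auto simp: has_triple_Cons T_def)
next
  assume "x < y" "y \<notin> set r"
  then have "y = Min {u\<in>insert y (set r). x < u} \<longleftrightarrow> \<not> (\<exists>z\<in>set r. T x y z)"
    unfolding T_def by (subst eq_commute, subst Min_eq_iff) auto
  moreover have "has_pair (T y) r \<Longrightarrow> has_pair (T x) r"
    by (erule has_pair_mono) (use \<open>x < y\<close> in \<open>simp add: T_def\<close>)
  ultimately show "\<not> has_triple T (x # y # r) \<longleftrightarrow> y = Min {u\<in>insert y (set r). x < u} \<and> \<not> has_triple T (x # r)"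
    unfolding has_triple_Cons_Cons by (auto simp: has_triple_Cons)
qed

lemma arr_count_avoid_123_eq_132:
  assumes "finite U"
  shows "arr_count U (\<lambda>r. \<not> has_triple (\<lambda>u v w. u < v \<and> v < w) r) =
    arr_count U (\<lambda>r. \<not> has_triple (\<lambda>u v w. u < w \<and> w < v) r)"
    (is "arr_count U (\<lambda>r. \<not> has_triple ?T123 r) = arr_count U (\<lambda>r. \<not> has_triple ?T132 r)")
proof -
  define x where "x = Max (insert 0 U)"
  have prepend_top: "\<not> has_triple T (x # r) \<longleftrightarrow> \<not> has_triple T r"
    if "set r = U" and "\<And>v w. T x v w \<Longrightarrow> x < v \<or> x < w" for T r
  proof -
    have "\<forall>z\<in>set r. z \<le> x"
      using assms that(1) unfolding x_def by simp
    then have "\<not> has_pair (T x) r"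
      using that(2) by (rule has_pair_bounded)
    then show ?thesis
      by (simp add: has_triple_Cons)
  qed
  have "arr_count U (\<lambda>r. \<not> has_triple ?T123 r) = arr_count U (\<lambda>r. \<not> has_triple ?T123 (x # r))"
    by (rule arr_count_cong, rule prepend_top[symmetric]) auto
  also have "\<dots> = threshold_count (card {u\<in>U. u \<le> x}) (card {u\<in>U. x < u})"
    using threshold_rec_arr_count[OF avoid_123_threshold valid_pick_Max]
      threshold_rec_threshold_count[OF valid_pick_Max]
    by (rule threshold_rec_unique[OF valid_pick_Max _ _ assms])
  also have "\<dots> = arr_count U (\<lambda>r. \<not> has_triple ?T132 (x # r))"
    using threshold_rec_threshold_count[OF valid_pick_Min_above]
      threshold_rec_arr_count[OF avoid_132_threshold valid_pick_Min_above]
    by (rule threshold_rec_unique[OF valid_pick_Min_above _ _ assms])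
  also have "\<dots> = arr_count U (\<lambda>r. \<not> has_triple ?T132 r)"
    by (rule arr_count_cong, rule prepend_top) auto
  finally show ?thesis .
qed

lemma arr_count_avoid_chain3_rev:
  assumes "a \<in> {1..3}" "b \<in> {1..3}" "c \<in> {1..3}"
  shows "arr_count U (\<lambda>r. \<not> contains_pop 3 (chain3 a b c) r) =
    arr_count U (\<lambda>r. \<not> contains_pop 3 (chain3 (4-a) (4-b) (4-c)) r)"
proof -
  have "contains_pop 3 (chain3 a b c) (rev r) \<longleftrightarrow> contains_pop 3 (chain3 (4-a) (4-b) (4-c)) r" for r
    unfolding contains_pop_rev using assms by (intro contains_pop_cong) (auto simp: chain3_def)
  then show ?thesis
    using arr_count_rev[of U "\<lambda>r. \<not> contains_pop 3 (chain3 a b c) r"] by simp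
qed

lemma chain3_converse: "(\<lambda>j m. chain3 a b c m j) = chain3 c b a"
  unfolding chain3_def by (auto simp: fun_eq_iff)

lemma arr_count_avoid_chain3_complement:
  assumes "U \<subseteq> {..N}"
  shows "arr_count ((\<lambda>x. N - x) ` U) (\<lambda>r. \<not> contains_pop 3 (chain3 a b c) r) =
    arr_count U (\<lambda>r. \<not> contains_pop 3 (chain3 c b a) r)"
proof -
  have "inj_on (\<lambda>x. N - x) U"
    using assms by (intro inj_onI) (metis atMost_iff diff_diff_cancel subsetD)
  then have "arr_count ((\<lambda>x. N - x) ` U) (\<lambda>r. \<not> contains_pop 3 (chain3 a b c) r) =
      arr_count U (\<lambda>r. \<not> contains_pop 3 (chain3 a b c) (map (\<lambda>x. N - x) r))"
    by (rule arr_count_image)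
  also have "\<dots> = arr_count U (\<lambda>r. \<not> contains_pop 3 (chain3 c b a) r)"
  proof (rule arr_count_cong)
    fix r :: "nat list" assume "set r = U"
    then have "\<forall>x\<in>set r. \<forall>y\<in>set r. x < y \<longrightarrow> N - y < N - x"
      using assms by auto
    then show "(\<not> contains_pop 3 (chain3 a b c) (map (\<lambda>x. N - x) r)) = (\<not> contains_pop 3 (chain3 c b a) r)"
      by (simp add: contains_pop_map_antimono chain3_converse)
  qed
  finally show ?thesis .
qed

lemma arr_count_avoid_chain3_321_eq_231:
  "finite U \<Longrightarrow> arr_count U (\<lambda>r. \<not> contains_pop 3 (chain3 3 2 1) r) =
    arr_count U (\<lambda>r. \<not> contains_pop 3 (chain3 2 3 1) r)"
  unfolding contains_123_iff contains_132_iff by (rule arr_count_avoid_123_eq_132)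

lemma arr_count_avoid_chain3_123_eq_132:
  assumes "finite U"
  shows "arr_count U (\<lambda>r. \<not> contains_pop 3 (chain3 1 2 3) r) =
    arr_count U (\<lambda>r. \<not> contains_pop 3 (chain3 1 3 2) r)"
proof -
  define N where "N = Max (insert 0 U)"
  define V where "V = (\<lambda>x. N - x) ` U"
  have "U \<subseteq> {..N}"
    using assms unfolding N_def by auto
  then have U: "U = (\<lambda>x. N - x) ` V"
    unfolding V_def image_image by (auto intro!: image_eqI)
  have "V \<subseteq> {..N}" "finite V"
    using assms unfolding V_def by auto
  show ?thesis
    unfolding U arr_count_avoid_chain3_complement[OF \<open>V \<subseteq> {..N}\<close>]
    by (rule arr_count_avoid_chain3_321_eq_231[OF \<open>finite V\<close>])
qed


lemma set3_eq_123_cases: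
  fixes a b c :: nat
  assumes "{a, b, c} = {1, 2, 3}"
  obtains "a = 1" "b = 2" "c = 3" | "a = 1" "b = 3" "c = 2" | "a = 2" "b = 1" "c = 3"
    | "a = 2" "b = 3" "c = 1" | "a = 3" "b = 1" "c = 2" | "a = 3" "b = 2" "c = 1"
proof -
  have "a \<in> {1, 2, 3}" "b \<in> {1, 2, 3}" "c \<in> {1, 2, 3}"
    unfolding assms[symmetric] by simp_all
  then have abc: "a = 1 \<or> a = 2 \<or> a = 3" "b = 1 \<or> b = 2 \<or> b = 3" "c = 1 \<or> c = 2 \<or> c = 3"
    by simp_all
  have "1 \<in> {a, b, c}" "2 \<in> {a, b, c}" "3 \<in> {a, b, c}"
    unfolding assms by simp_all
  then have onto: "a = 1 \<or> b = 1 \<or> c = 1" "a = 2 \<or> b = 2 \<or> c = 2" "a = 3 \<or> b = 3 \<or> c = 3"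
    by auto
  from abc(1) abc(2) abc(3) onto show thesis
    by (elim disjE) (simp_all add: that)
qed

lemma arr_count_avoid_chain3:
  assumes "{a, b, c} = {1::nat, 2, 3}" and "finite U"
  shows "arr_count U (\<lambda>r. \<not> contains_pop 3 (chain3 a b c) r) =
    arr_count U (\<lambda>r. \<not> contains_pop 3 (chain3 3 2 1) r)"
proof -
  define av where "av a b c = arr_count U (\<lambda>r. \<not> contains_pop 3 (chain3 a b c) r)" for a b c :: nat
  have rev: "av a b c = av (4-a) (4-b) (4-c)" if "a \<in> {1..3}" "b \<in> {1..3}" "c \<in> {1..3}" for a b c
    unfolding av_def using that by (rule arr_count_avoid_chain3_rev)
  have e123: "av 1 2 3 = av 3 2 1"
    using rev[of 1 2 3] by simp
  have e231: "av 2 3 1 = av 3 2 1"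
    unfolding av_def using arr_count_avoid_chain3_321_eq_231[OF assms(2)] by simp
  have e213: "av 2 1 3 = av 3 2 1"
    using rev[of 2 1 3] e231 by simp
  have e132: "av 1 3 2 = av 3 2 1"
    unfolding av_def using arr_count_avoid_chain3_123_eq_132[OF assms(2)] e123 unfolding av_def by simp
  have e312: "av 3 1 2 = av 3 2 1"
    using rev[of 3 1 2] e132 by simp
  from assms(1) have "av a b c = av 3 2 1"
    by (rule set3_eq_123_cases) (simp_all only: e123 e231 e213 e132 e312)
  then show ?thesis
    unfolding av_def .
qed

section \<open>Arrangements with a good prefix or a good suffix at every cut\<close>

locale prefix_suffix_split =
  fixes P D :: "nat list \<Rightarrow> bool"
  assumes P_Nil: "P []"
    and P_take: "P xs \<Longrightarrow> P (take i xs)"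
    and D_drop: "D xs \<Longrightarrow> D (drop i xs)"
    and D_unique: "finite S \<Longrightarrow> \<exists>!xs. distinct xs \<and> set xs = S \<and> D xs"
begin

definition D_arrangement :: "nat set \<Rightarrow> nat list" where
  "D_arrangement S = (THE xs. distinct xs \<and> set xs = S \<and> D xs)"

lemma D_arrangement:
  "finite S \<Longrightarrow> distinct (D_arrangement S) \<and> set (D_arrangement S) = S \<and> D (D_arrangement S)"
  unfolding D_arrangement_def by (rule theI'[OF D_unique])

lemma D_arrangement_unique: "finite S \<Longrightarrow> distinct xs \<Longrightarrow> set xs = S \<Longrightarrow> D xs \<Longrightarrow> D_arrangement S = xs"
  unfolding D_arrangement_def by (rule the1_equality[OF D_unique]) simp_all

definition P_words :: "nat set \<Rightarrow> nat list set" where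
  "P_words V = {p. distinct p \<and> set p \<subseteq> V \<and> P p}"

definition P_word_extensions :: "nat set \<Rightarrow> nat list set" where
  "P_word_extensions V = {zs. distinct zs \<and> set zs \<subseteq> V \<and> zs \<noteq> [] \<and> P (butlast zs)}"

definition first_failures :: "nat set \<Rightarrow> nat list set" where
  "first_failures V = {zs. distinct zs \<and> set zs \<subseteq> V \<and> zs \<noteq> [] \<and> P (butlast zs) \<and> \<not> P zs}"

lemma finite_P_words: "finite V \<Longrightarrow> finite (P_words V)"
  unfolding P_words_def by (rule finite_subset[OF _ finite_subset_distinct]) auto

lemma sum_P_words:
  assumes "finite V"
  shows "(\<Sum>p\<in>P_words V. h (set p)) = (\<Sum>U\<in>Pow V. arr_count U P * h U)"
proof -
  have "(\<Sum>p\<in>P_words V. h (set p)) = (\<Sum>U\<in>Pow V. \<Sum>p\<in>{p\<in>P_words V. set p = U}. h (set p))"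
    using assms by (intro sum.group[symmetric] finite_P_words) (auto simp: P_words_def)
  also have "\<dots> = (\<Sum>U\<in>Pow V. arr_count U P * h U)"
  proof (intro sum.cong refl)
    fix U assume "U \<in> Pow V"
    then have "{p\<in>P_words V. set p = U} = {r. distinct r \<and> set r = U \<and> P r}"
      unfolding P_words_def by auto
    then show "(\<Sum>p\<in>{p\<in>P_words V. set p = U}. h (set p)) = arr_count U P * h U"
      unfolding arr_count_def by simp
  qed
  finally show ?thesis .
qed

lemma card_P_words: "finite V \<Longrightarrow> card (P_words V) = (\<Sum>U\<in>Pow V. arr_count U P)"
  using sum_P_words[of V "\<lambda>_. 1"] by simp

lemma card_P_word_extensions:
  assumes "finite V"
  shows "card (P_word_extensions V) = (\<Sum>U\<in>Pow V. arr_count U P * (card V - card U))"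
proof -
  let ?snoc = "\<lambda>(p, y). p @ [y]" and ?S = "SIGMA p:P_words V. V - set p"
  have "P_word_extensions V = ?snoc ` ?S"
  proof (intro set_eqI iffI)
    fix zs assume "zs \<in> P_word_extensions V"
    then have zs: "distinct zs" "set zs \<subseteq> V" "zs \<noteq> []" "P (butlast zs)"
      unfolding P_word_extensions_def by auto
    define p where "p = butlast zs"
    define y where "y = last zs"
    have "zs = p @ [y]"
      using zs(3) unfolding p_def y_def by simp
    with zs have "(p, y) \<in> ?S"
      unfolding P_words_def by auto
    with \<open>zs = p @ [y]\<close> show "zs \<in> ?snoc ` ?S"
      by (intro image_eqI[where x = "(p, y)"]) simp_all
  qed (auto simp: P_words_def P_word_extensions_def)
  moreover have "inj_on ?snoc ?S"
    by (auto simp: inj_on_def)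
  ultimately have "card (P_word_extensions V) = (\<Sum>p\<in>P_words V. card (V - set p))"
    using assms finite_P_words by (simp add: card_image card_SigmaI)
  also have "\<dots> = (\<Sum>p\<in>P_words V. card V - card (set p))"
    using assms by (intro sum.cong refl) (auto simp: P_words_def card_Diff_subset)
  finally show ?thesis
    using sum_P_words[OF assms, of "\<lambda>U. card V - card U"] by simp
qed

lemma card_first_failures:
  assumes "finite V"
  shows "card (first_failures V) + (\<Sum>U\<in>Pow V. arr_count U P) =
    (\<Sum>U\<in>Pow V. arr_count U P * (card V - card U)) + 1"
proof -
  have "P_word_extensions V = first_failures V \<union> (P_words V - {[]})"
    unfolding P_word_extensions_def first_failures_def P_words_def using P_take
    by (auto simp: butlast_conv_take)
  moreover have "first_failures V \<inter> (P_words V - {[]}) = {}"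
    unfolding first_failures_def P_words_def by auto
  moreover have "finite (first_failures V)"
    unfolding first_failures_def by (rule finite_subset[OF _ finite_subset_distinct[OF assms]]) auto
  moreover have "[] \<in> P_words V"
    using P_Nil by (simp add: P_words_def)
  then have "card (P_words V - {[]}) + 1 = card (P_words V)"
    using card_Suc_Diff1[OF finite_P_words[OF assms]] by simp
  ultimately show ?thesis
    using card_P_word_extensions[OF assms] card_P_words[OF assms] finite_P_words[OF assms]
    by (simp add: card_Un_disjoint)
qed

lemma first_failure_append_D_arrangement:
  assumes "finite V" and zs: "zs \<in> first_failures V"
  defines "xs \<equiv> zs @ D_arrangement (V - set zs)"
  shows "distinct xs" "set xs = V" "prefix_or_suffix P D xs" "\<not> P xs"
proof -
  have z: "distinct zs" "set zs \<subseteq> V" "zs \<noteq> []" "P (butlast zs)" "\<not> P zs"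
    using zs unfolding first_failures_def by auto
  have d: "distinct (D_arrangement (V - set zs))" "set (D_arrangement (V - set zs)) = V - set zs"
    "D (D_arrangement (V - set zs))"
    using D_arrangement[of "V - set zs"] assms(1) by auto
  show "distinct xs" "set xs = V"
    unfolding xs_def using z d by auto
  show "\<not> P xs"
    using P_take[of xs "length zs"] z unfolding xs_def by auto
  show "prefix_or_suffix P D xs"
    unfolding prefix_or_suffix_def
  proof
    fix i
    show "P (take i xs) \<or> D (drop i xs)"
    proof (cases "i < length zs")
      case True
      then have "take i xs = take i (butlast zs)"
        unfolding xs_def by (simp add: butlast_conv_take)
      then show ?thesis
        using P_take[OF z(4)] by simp
    next
      case False
      then have "drop i xs = drop (i - length zs) (D_arrangement (V - set zs))"
        unfolding xs_def by simp
      then show ?thesis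
        using D_drop[OF d(3)] by simp
    qed
  qed
qed

lemma first_failure_extension:
  assumes "zs \<in> first_failures V" and "zs @ w \<in> first_failures V'"
  shows "w = []"
proof (rule ccontr)
  assume "w \<noteq> []"
  then have "P (zs @ butlast w)"
    using assms(2) unfolding first_failures_def by (simp add: butlast_append)
  then have "P zs"
    using P_take[of "zs @ butlast w" "length zs"] by simp
  then show False
    using assms(1) unfolding first_failures_def by simp
qed

lemma split_at_first_failure:
  assumes "distinct xs" "set xs = V" "prefix_or_suffix P D xs" "\<not> P xs" "finite V"
  obtains zs where "zs \<in> first_failures V" "xs = zs @ D_arrangement (V - set zs)"
proof -
  define m where "m = (LEAST i. \<not> P (take i xs))"
  have "\<not> P (take (length xs) xs)"
    using assms(4) by simp
  then have m_fail: "\<not> P (take m xs)" and m_le: "m \<le> length xs"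
    unfolding m_def by (rule LeastI, rule Least_le)
  have "m \<noteq> 0"
  proof
    assume "m = 0"
    with m_fail P_Nil show False by simp
  qed
  define zs where "zs = take m xs"
  have "P (take (m - 1) xs)"
    using not_less_Least[of "m - 1" "\<lambda>i. \<not> P (take i xs)"] \<open>m \<noteq> 0\<close> unfolding m_def by simp
  then have "zs \<in> first_failures V"
    using assms(1,2) m_fail m_le \<open>m \<noteq> 0\<close> unfolding first_failures_def zs_def
    by (auto simp: butlast_take dest: in_set_takeD)
  moreover have "drop m xs = D_arrangement (V - set zs)"
  proof (rule D_arrangement_unique[symmetric])
    show "finite (V - set zs)"
      using assms(5) by simp
    show "distinct (drop m xs)"
      using assms(1) by simp
    have "set zs \<union> set (drop m xs) = V"
      using assms(2) unfolding zs_def by (metis append_take_drop_id set_append)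
    moreover have "set zs \<inter> set (drop m xs) = {}"
      using assms(1) unfolding zs_def by (simp add: set_take_disj_set_drop_if_distinct)
    ultimately show "set (drop m xs) = V - set zs"
      by blast
    show "D (drop m xs)"
      using assms(3) m_fail unfolding prefix_or_suffix_def by blast
  qed
  moreover have "xs = zs @ drop m xs"
    unfolding zs_def by simp
  ultimately show thesis
    using that by simp
qed

text \<open>Such an arrangement violating \<open>P\<close> is determined by its shortest prefix violating \<open>P\<close>,
  since the rest is then the unique \<open>D\<close>-arrangement of the remaining elements.\<close>

lemma arr_count_failing_prefix_or_suffix:
  assumes "finite V"
  shows "arr_count V (\<lambda>xs. prefix_or_suffix P D xs \<and> \<not> P xs) = card (first_failures V)"
proof -
  let ?f = "\<lambda>zs. zs @ D_arrangement (V - set zs)"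
  have "{xs. distinct xs \<and> set xs = V \<and> prefix_or_suffix P D xs \<and> \<not> P xs} = ?f ` first_failures V"
  proof (intro set_eqI iffI)
    fix xs assume "xs \<in> {xs. distinct xs \<and> set xs = V \<and> prefix_or_suffix P D xs \<and> \<not> P xs}"
    then show "xs \<in> ?f ` first_failures V"
      using assms by (auto elim: split_at_first_failure)
  qed (use first_failure_append_D_arrangement[OF assms] in auto)
  moreover have "inj_on ?f (first_failures V)"
  proof (rule inj_onI)
    fix zs zs' assume zs: "zs \<in> first_failures V" and zs': "zs' \<in> first_failures V" and "?f zs = ?f zs'"
    then obtain us where "zs = zs' @ us \<or> zs @ us = zs'"
      by (auto simp: append_eq_append_conv2)
    then show "zs = zs'"
      using first_failure_extension zs zs' by auto
  qed
  ultimately show ?thesis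
    unfolding arr_count_def by (simp add: card_image)
qed

lemma arr_count_prefix_or_suffix:
  assumes "finite V"
  shows "arr_count V (prefix_or_suffix P D) + (\<Sum>U\<in>Pow V. arr_count U P) =
    arr_count V P + (\<Sum>U\<in>Pow V. arr_count U P * (card V - card U)) + 1"
proof -
  have "arr_count V (\<lambda>xs. prefix_or_suffix P D xs \<and> P xs) = arr_count V P"
    using P_take unfolding prefix_or_suffix_def by (intro arr_count_cong) blast
  then have "arr_count V (prefix_or_suffix P D) = arr_count V P + card (first_failures V)"
    using arr_count_partition[OF assms, of "prefix_or_suffix P D" P]
      arr_count_failing_prefix_or_suffix[OF assms] by simp
  then show ?thesis
    using card_first_failures[OF assms] by simp
qed

end

lemma arr_count_prefix_or_suffix_eq:
  assumes "prefix_suffix_split P D" and "prefix_suffix_split Q D'" and "finite V"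
    and "\<And>U. U \<subseteq> V \<Longrightarrow> arr_count U P = arr_count U Q"
  shows "arr_count V (prefix_or_suffix P D) = arr_count V (prefix_or_suffix Q D')"
proof -
  have "(\<Sum>U\<in>Pow V. arr_count U P * (card V - card U)) = (\<Sum>U\<in>Pow V. arr_count U Q * (card V - card U))"
    "(\<Sum>U\<in>Pow V. arr_count U P) = (\<Sum>U\<in>Pow V. arr_count U Q)"
    using assms(4) by (auto intro: sum.cong)
  then show ?thesis
    using prefix_suffix_split.arr_count_prefix_or_suffix[OF assms(1,3)]
      prefix_suffix_split.arr_count_prefix_or_suffix[OF assms(2,3)] assms(4)[of V] by simp
qed

section \<open>The POPs (a,b,c;d,e)\<close>

lemma ex1_sorted_arrangement:
  fixes S :: "'a::linorder set"
  shows "finite S \<Longrightarrow> \<exists>!xs. distinct xs \<and> set xs = S \<and> sorted xs"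
  using ex1_sorted_list_for_set_if_finite by (simp add: strict_sorted_iff conj_ac)

lemma ex1_sorted_desc_arrangement:
  fixes S :: "'a::linorder set"
  assumes "finite S"
  shows "\<exists>!xs. distinct xs \<and> set xs = S \<and> sorted_wrt (\<ge>) xs"
proof -
  have "distinct xs \<and> set xs = S \<and> sorted_wrt (\<ge>) xs \<longleftrightarrow>
      distinct (rev xs) \<and> set (rev xs) = S \<and> sorted (rev xs)" for xs
    by (simp add: sorted_wrt_rev)
  then show ?thesis
    using ex1_sorted_arrangement[OF assms] by (metis rev_rev_ident)
qed

lemma prefix_suffix_split_avoid_sorted:
  assumes "0 < k" and "\<And>S. finite S \<Longrightarrow> \<exists>!xs. distinct xs \<and> set xs = S \<and> sorted_wrt R xs"
  shows "prefix_suffix_split (\<lambda>r. \<not> contains_pop k rel r) (sorted_wrt R)"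
  using assms by unfold_locales (auto simp: contains_pop_Nil dest: contains_pop_take)

lemma card_avoiders_rev:
  "card (avoiders k rel n) = card (avoiders k (\<lambda>j m. rel (k+1-j) (k+1-m)) n)"
  unfolding card_avoiders contains_pop_rev[symmetric] by (rule arr_count_rev[symmetric])

lemma card_avoiders_cong:
  assumes "\<And>j m. j \<in> {1..k} \<Longrightarrow> m \<in> {1..k} \<Longrightarrow> rel j m = rel' j m"
  shows "card (avoiders k rel n) = card (avoiders k rel' n)"
  unfolding card_avoiders using contains_pop_cong[OF assms] by simp

lemma pop5_low_suffix:
  assumes "{a, b, c} = {1, 2, 3}" and "{d, e} = {4, 5}"
  obtains R where "\<And>ys. \<not> contains_pop 2 (\<lambda>j m. pop5 a b c d e (j+3) (m+3)) ys \<longleftrightarrow> sorted_wrt R ys"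
    and "\<And>S. finite S \<Longrightarrow> \<exists>!xs. distinct xs \<and> set xs = S \<and> sorted_wrt R xs"
proof -
  have abc: "a \<in> {1, 2, 3}" "b \<in> {1, 2, 3}" "c \<in> {1, 2, 3}"
    unfolding assms(1)[symmetric] by simp_all
  from assms(2) consider "d = 4" "e = 5" | "d = 5" "e = 4"
    by (auto simp: doubleton_eq_iff)
  then show thesis
  proof cases
    case 1
    have suffix: "contains_pop 2 (\<lambda>j m. pop5 a b c d e (j+3) (m+3)) ys \<longleftrightarrow> \<not> sorted ys" for ys
      unfolding contains_21_iff_not_sorted[symmetric] using abc 1
      by (intro contains_pop_cong) (auto simp: pop5_def)
    show thesis
      by (rule that[of "(\<le>)"]) (simp_all add: suffix ex1_sorted_arrangement)
  next
    case 2
    have suffix: "contains_pop 2 (\<lambda>j m. pop5 a b c d e (j+3) (m+3)) ys \<longleftrightarrow> \<not> sorted_wrt (\<ge>) ys" for ys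
      unfolding contains_12_iff_not_sorted_desc[symmetric] using abc 2
      by (intro contains_pop_cong) (auto simp: pop5_def)
    show thesis
      by (rule that[of "(\<ge>)"]) (simp_all add: suffix ex1_sorted_desc_arrangement)
  qed
qed

lemma card_avoiders_pop5_low:
  assumes abc: "{a, b, c} = {1, 2, 3}" and de: "{d, e} = {4, 5}"
  shows "card (avoiders 5 (pop5 a b c d e) n) =
    arr_count {1..n} (prefix_or_suffix (\<lambda>r. \<not> contains_pop 3 (chain3 3 2 1) r) sorted)"
proof -
  obtain R where R_suffix: "\<And>ys. \<not> contains_pop 2 (\<lambda>j m. pop5 a b c d e (j+3) (m+3)) ys \<longleftrightarrow> sorted_wrt R ys"
    and R_unique: "\<And>S. finite S \<Longrightarrow> \<exists>!xs. distinct xs \<and> set xs = S \<and> sorted_wrt R xs"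
    using pop5_low_suffix[OF assms] by blast
  have "a \<in> {1, 2, 3}" "b \<in> {1, 2, 3}" "c \<in> {1, 2, 3}"
    unfolding abc[symmetric] by simp_all
  moreover have "d \<in> {4, 5}" "e \<in> {4, 5}"
    unfolding de[symmetric] by simp_all
  ultimately have block: "j \<le> 3 \<longleftrightarrow> m \<le> 3" if "pop5 a b c d e j m" for j m
    using that unfolding pop5_def by auto
  have prefix: "contains_pop 3 (pop5 a b c d e) r \<longleftrightarrow> contains_pop 3 (chain3 a b c) r" for r
    using \<open>d \<in> {4, 5}\<close> \<open>e \<in> {4, 5}\<close> by (intro contains_pop_cong) (auto simp: pop5_def chain3_def)
  have "\<not> contains_pop 5 (pop5 a b c d e) xs \<longleftrightarrow>
      prefix_or_suffix (\<lambda>r. \<not> contains_pop 3 (chain3 a b c) r) (sorted_wrt R) xs" for xs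
    using not_contains_pop_split_iff[of 3 2 "pop5 a b c d e" xs] block
    by (simp add: prefix R_suffix)
  then have "card (avoiders 5 (pop5 a b c d e) n) =
      arr_count {1..n} (prefix_or_suffix (\<lambda>r. \<not> contains_pop 3 (chain3 a b c) r) (sorted_wrt R))"
    unfolding card_avoiders by simp
  also have "\<dots> = arr_count {1..n} (prefix_or_suffix (\<lambda>r. \<not> contains_pop 3 (chain3 3 2 1) r) sorted)"
  proof (rule arr_count_prefix_or_suffix_eq)
    show "prefix_suffix_split (\<lambda>r. \<not> contains_pop 3 (chain3 a b c) r) (sorted_wrt R)"
      by (rule prefix_suffix_split_avoid_sorted) (simp_all add: R_unique)
    show "prefix_suffix_split (\<lambda>r. \<not> contains_pop 3 (chain3 3 2 1) r) sorted"
      by (rule prefix_suffix_split_avoid_sorted) (simp_all add: ex1_sorted_arrangement)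
    show "arr_count U (\<lambda>r. \<not> contains_pop 3 (chain3 a b c) r) =
        arr_count U (\<lambda>r. \<not> contains_pop 3 (chain3 3 2 1) r)" if "U \<subseteq> {1..n}" for U
      using abc finite_subset[OF that finite_atLeastAtMost] by (rule arr_count_avoid_chain3)
  qed simp
  finally show ?thesis .
qed

lemma card_avoiders_pop5_mirror:
  assumes "a \<in> {1..5}" "b \<in> {1..5}" "c \<in> {1..5}" "d \<in> {1..5}" "e \<in> {1..5}"
  shows "card (avoiders 5 (pop5 a b c d e) n) = card (avoiders 5 (pop5 (6-a) (6-b) (6-c) (6-d) (6-e)) n)"
proof -
  have mirror: "5 + 1 - x = y \<longleftrightarrow> x = 6 - y" if "x \<in> {1..5}" "y \<in> {1..5}" for x y :: nat
    using that by auto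
  show ?thesis
    unfolding card_avoiders_rev[of 5 "pop5 a b c d e"]
  proof (rule card_avoiders_cong)
    fix j m :: nat assume j: "j \<in> {1..5}" and m: "m \<in> {1..5}"
    show "pop5 a b c d e (5 + 1 - j) (5 + 1 - m) = pop5 (6-a) (6-b) (6-c) (6-d) (6-e) j m"
      unfolding pop5_def
      by (simp only: mirror[OF j assms(1)] mirror[OF j assms(2)] mirror[OF j assms(3)]
          mirror[OF j assms(4)] mirror[OF j assms(5)] mirror[OF m assms(1)] mirror[OF m assms(2)]
          mirror[OF m assms(3)] mirror[OF m assms(4)] mirror[OF m assms(5)])
  qed
qed

lemma card_avoiders_admissible5:
  assumes "admissible5 a b c d e"
  shows "card (avoiders 5 (pop5 a b c d e) n) =
    arr_count {1..n} (prefix_or_suffix (\<lambda>r. \<not> contains_pop 3 (chain3 3 2 1) r) sorted)"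
  using assms unfolding admissible5_def
proof
  assume "{a, b, c} = {1, 2, 3} \<and> {d, e} = {4, 5}"
  then show ?thesis
    by (intro card_avoiders_pop5_low) simp_all
next
  assume high: "{a, b, c} = {3, 4, 5} \<and> {d, e} = {1, 2}"
  have "a \<in> {3, 4, 5}" "b \<in> {3, 4, 5}" "c \<in> {3, 4, 5}" "d \<in> {1, 2}" "e \<in> {1, 2}"
    using high by blast+
  then have range: "a \<in> {1..5}" "b \<in> {1..5}" "c \<in> {1..5}" "d \<in> {1..5}" "e \<in> {1..5}"
    by auto
  have "{6-a, 6-b, 6-c} = (\<lambda>x. 6 - x) ` {3, 4, 5}" "{6-d, 6-e} = (\<lambda>x. 6 - x) ` {1, 2}"
    using high by (metis image_empty image_insert)+
  then have "{6-a, 6-b, 6-c} = {1, 2, 3}" "{6-d, 6-e} = {4, 5}"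
    by auto
  then show ?thesis
    using card_avoiders_pop5_mirror[OF range] card_avoiders_pop5_low by simp
qed

theorem mainTheorem12:
  assumes "admissible5 a b c d e"
    and "admissible5 a' b' c' d' e'"
  shows "wilf_equiv 5 (pop5 a b c d e) (pop5 a' b' c' d' e')"
  unfolding wilf_equiv_def
  using card_avoiders_admissible5[OF assms(1)] card_avoiders_admissible5[OF assms(2)] by simp

end
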